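(* Let $R$ be a ring, $S$ a left Ore set of $R$, and $\mathfrak{a}=\mathrm{ass}_R(S)$. Then \begin{enumerate} \item $S$ is a left localizable set of $R$ if and only if ${}'\mathfrak{a}\neq R$, where ${}'\mathfrak{a}={}'\mathfrak{a}(S)$. \item Suppose ${}'\mathfrak{a}\neq R$. Let ${}'\pi:R\to{}'R:=R/{}'\mathfrak{a}$, $r\mapsto{}'r=r+{}'\mathfrak{a}$, and ${}'S={}'\pi(S)$. Then \begin{enumerate} \item ${}'S$ is a left denominator set of ${}'R$ contained in ${}'\mathcal{C}_{{}'R}$; \item $\mathfrak{a}={}'\pi^{-1}(\mathrm{ass}_l({}'S))$; \item $R\langle S^{-1}\rangle\simeq {}'S^{-1}\,{}'R$, an $R$-isomorphism. \end{enumerate} \end{enumerate}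
   Context: Rings are associative with $1$. A multiplicative set $S$: $SS\subseteq S$, $1\in S$, $0\notin S$. $R\langle S^{-1}\rangle=R\langle X_S\rangle/I_S$, where $R\langle X_S\rangle$ is freely generated by $R$ and noncommuting indeterminates $x_s$ ($s\in S$) and $I_S$ is generated by $sx_s-1,x_ss-1$; $\mathrm{ass}_R(S)$ is the kernel of $R\to R\langle S^{-1}\rangle$. $S$ is left localizable if $R\langle S^{-1}\rangle\ne0$ and every element is of the form $(x_s+I_S)(r+I_S)$, $s\in S$, $r\in R$. Left Ore set: $Sr\cap Rs\ne\emptyset$ for all $r\in R$, $s\in S$. Left denominator set: left Ore and $rs=0$ ($s\in S$) implies $tr=0$ for some $t\in S$; $T^{-1}A$ is the Ore localization. For a ring $A$, ${}'\mathcal{C}_A=\{r\in A: xr=0\Rightarrow x=0\}$; $\mathrm{ass}_l(T)=\{a\in A: ta=0\text{ for some } t\in T\}$. ${}'\mathfrak{a}(S)$ is the least ideal $\mathfrak{b}$ of $R$ such that the image of $S$ in $R/\mathfrak{b}$ is contained in ${}'\mathcal{C}_{R/\mathfrak{b}}$ (it exists). An $R$-isomorphism is an isomorphism compatible with the structure maps from $R$. *)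

theory Defs
  imports "HOL-Algebra.Algebra"
begin

definition mult_set :: "('a, 'm) ring_scheme \<Rightarrow> 'a set \<Rightarrow> bool" where
  "mult_set R S \<longleftrightarrow> S \<subseteq> carrier R \<and> \<one>\<^bsub>R\<^esub> \<in> S \<and> \<zero>\<^bsub>R\<^esub> \<notin> S \<and>
     (\<forall>s\<in>S. \<forall>t\<in>S. s \<otimes>\<^bsub>R\<^esub> t \<in> S)"

definition left_ore_set :: "('a, 'm) ring_scheme \<Rightarrow> 'a set \<Rightarrow> bool" where
  "left_ore_set R S \<longleftrightarrow> mult_set R S \<and>
     (\<forall>r\<in>carrier R. \<forall>s\<in>S. \<exists>t\<in>S. \<exists>r'\<in>carrier R. t \<otimes>\<^bsub>R\<^esub> r = r' \<otimes>\<^bsub>R\<^esub> s)"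

definition left_denominator_set :: "('a, 'm) ring_scheme \<Rightarrow> 'a set \<Rightarrow> bool" where
  "left_denominator_set R S \<longleftrightarrow> left_ore_set R S \<and>
     (\<forall>r\<in>carrier R. \<forall>s\<in>S. r \<otimes>\<^bsub>R\<^esub> s = \<zero>\<^bsub>R\<^esub> \<longrightarrow> (\<exists>t\<in>S. t \<otimes>\<^bsub>R\<^esub> r = \<zero>\<^bsub>R\<^esub>))"

definition left_reg :: "('a, 'm) ring_scheme \<Rightarrow> 'a set" where
  "left_reg A = {r \<in> carrier A. \<forall>x\<in>carrier A. x \<otimes>\<^bsub>A\<^esub> r = \<zero>\<^bsub>A\<^esub> \<longrightarrow> x = \<zero>\<^bsub>A\<^esub>}"

definition ass_l :: "('a, 'm) ring_scheme \<Rightarrow> 'a set \<Rightarrow> 'a set" where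
  "ass_l A T = {a \<in> carrier A. \<exists>t\<in>T. t \<otimes>\<^bsub>A\<^esub> a = \<zero>\<^bsub>A\<^esub>}"

definition image_left_reg :: "('a, 'm) ring_scheme \<Rightarrow> 'a set \<Rightarrow> 'a set \<Rightarrow> bool" where
  "image_left_reg R S b \<longleftrightarrow> (\<lambda>r. b +>\<^bsub>R\<^esub> r) ` S \<subseteq> left_reg (R Quot b)"

definition pa :: "('a, 'm) ring_scheme \<Rightarrow> 'a set \<Rightarrow> 'a set" where
  "pa R S = (THE b. ideal b R \<and> image_left_reg R S b \<and>
                  (\<forall>c. ideal c R \<and> image_left_reg R S c \<longrightarrow> b \<subseteq> c))"

definition qproj :: "('a, 'm) ring_scheme \<Rightarrow> 'a set \<Rightarrow> 'a \<Rightarrow> 'a set" where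
  "qproj R b r = b +>\<^bsub>R\<^esub> r"

text \<open>Terms over generators  r \<in> R  (RC r)  and indeterminates  x_s  (TX s).\<close>
datatype 'a rterm = RC 'a | TX 'a | TZero | TOne | TAdd "'a rterm" "'a rterm"
  | TNeg "'a rterm" | TMul "'a rterm" "'a rterm"

fun wf_rterm :: "('a, 'm) ring_scheme \<Rightarrow> 'a set \<Rightarrow> 'a rterm \<Rightarrow> bool" where
  "wf_rterm R0 S0 (RC r) = (r \<in> carrier R0)"
| "wf_rterm R0 S0 (TX s) = (s \<in> S0)"
| "wf_rterm R0 S0 TZero = True"
| "wf_rterm R0 S0 TOne = True"
| "wf_rterm R0 S0 (TAdd a b) = (wf_rterm R0 S0 a \<and> wf_rterm R0 S0 b)"
| "wf_rterm R0 S0 (TNeg a) = wf_rterm R0 S0 a"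
| "wf_rterm R0 S0 (TMul a b) = (wf_rterm R0 S0 a \<and> wf_rterm R0 S0 b)"

text \<open>The congruence: ring axioms (giving the free ring on the generators), the
  relations making R a subring-image (R<X_S> is generated by R and the x_s), and
  the relations  s x_s = 1, x_s s = 1  generating I_S.\<close>
inductive loc_rel :: "('a, 'm) ring_scheme \<Rightarrow> 'a set \<Rightarrow> 'a rterm \<Rightarrow> 'a rterm \<Rightarrow> bool"
  for R S where
  refl: "loc_rel R S t t"
| sym: "loc_rel R S t u \<Longrightarrow> loc_rel R S u t"
| trans: "loc_rel R S t u \<Longrightarrow> loc_rel R S u v \<Longrightarrow> loc_rel R S t v"
| cong_add: "loc_rel R S a a' \<Longrightarrow> loc_rel R S b b' \<Longrightarrow> loc_rel R S (TAdd a b) (TAdd a' b')"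
| cong_neg: "loc_rel R S a a' \<Longrightarrow> loc_rel R S (TNeg a) (TNeg a')"
| cong_mul: "loc_rel R S a a' \<Longrightarrow> loc_rel R S b b' \<Longrightarrow> loc_rel R S (TMul a b) (TMul a' b')"
| add_assoc: "loc_rel R S (TAdd (TAdd a b) c) (TAdd a (TAdd b c))"
| add_comm: "loc_rel R S (TAdd a b) (TAdd b a)"
| add_zero: "loc_rel R S (TAdd TZero a) a"
| add_neg: "loc_rel R S (TAdd (TNeg a) a) TZero"
| mul_assoc: "loc_rel R S (TMul (TMul a b) c) (TMul a (TMul b c))"
| mul_one_l: "loc_rel R S (TMul TOne a) a"
| mul_one_r: "loc_rel R S (TMul a TOne) a"
| distr_l: "loc_rel R S (TMul a (TAdd b c)) (TAdd (TMul a b) (TMul a c))"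
| distr_r: "loc_rel R S (TMul (TAdd a b) c) (TAdd (TMul a c) (TMul b c))"
| r_add: "r \<in> carrier R \<Longrightarrow> r' \<in> carrier R \<Longrightarrow>
          loc_rel R S (RC (r \<oplus>\<^bsub>R\<^esub> r')) (TAdd (RC r) (RC r'))"
| r_mul: "r \<in> carrier R \<Longrightarrow> r' \<in> carrier R \<Longrightarrow>
          loc_rel R S (RC (r \<otimes>\<^bsub>R\<^esub> r')) (TMul (RC r) (RC r'))"
| r_one: "loc_rel R S (RC \<one>\<^bsub>R\<^esub>) TOne"
| inv_l: "s \<in> S \<Longrightarrow> loc_rel R S (TMul (RC s) (TX s)) TOne"
| inv_r: "s \<in> S \<Longrightarrow> loc_rel R S (TMul (TX s) (RC s)) TOne"

definition loc_class :: "('a, 'm) ring_scheme \<Rightarrow> 'a set \<Rightarrow> 'a rterm \<Rightarrow> 'a rterm set" where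
  "loc_class R S t = {u. loc_rel R S t u}"

definition rep :: "'b set \<Rightarrow> 'b" where
  "rep A = (SOME a. a \<in> A)"

definition univ_loc :: "('a, 'm) ring_scheme \<Rightarrow> 'a set \<Rightarrow> ('a rterm set) ring" where
  "univ_loc R S =
    \<lparr>carrier = loc_class R S ` {t. wf_rterm R S t},
     monoid.mult = (\<lambda>A B. loc_class R S (TMul (rep A) (rep B))),
     one = loc_class R S TOne,
     ring.zero = loc_class R S TZero,
     ring.add = (\<lambda>A B. loc_class R S (TAdd (rep A) (rep B)))\<rparr>"

definition loc_map :: "('a, 'm) ring_scheme \<Rightarrow> 'a set \<Rightarrow> 'a \<Rightarrow> 'a rterm set" where
  "loc_map R S r = loc_class R S (RC r)"

definition loc_x :: "('a, 'm) ring_scheme \<Rightarrow> 'a set \<Rightarrow> 'a \<Rightarrow> 'a rterm set" where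
  "loc_x R S s = loc_class R S (TX s)"

definition ass :: "('a, 'm) ring_scheme \<Rightarrow> 'a set \<Rightarrow> 'a set" where
  "ass R S = {r \<in> carrier R. loc_map R S r = \<zero>\<^bsub>univ_loc R S\<^esub>}"

definition left_localizable :: "('a, 'm) ring_scheme \<Rightarrow> 'a set \<Rightarrow> bool" where
  "left_localizable R S \<longleftrightarrow> \<one>\<^bsub>univ_loc R S\<^esub> \<noteq> \<zero>\<^bsub>univ_loc R S\<^esub> \<and>
     (\<forall>q\<in>carrier (univ_loc R S). \<exists>s\<in>S. \<exists>r\<in>carrier R.
        q = loc_x R S s \<otimes>\<^bsub>univ_loc R S\<^esub> loc_map R S r)"

text \<open>This determines T^-1 A up to A-isomorphism.\<close>
definition is_left_ore_localization ::
  "('a, 'm) ring_scheme \<Rightarrow> 'a set \<Rightarrow> ('b, 'n) ring_scheme \<Rightarrow> ('a \<Rightarrow> 'b) \<Rightarrow> bool" where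
  "is_left_ore_localization A T Q \<sigma> \<longleftrightarrow> ring Q \<and> \<sigma> \<in> ring_hom A Q \<and>
     (\<forall>t\<in>T. \<sigma> t \<in> Units Q) \<and>
     (\<forall>q\<in>carrier Q. \<exists>t\<in>T. \<exists>a\<in>carrier A. q = inv\<^bsub>Q\<^esub> (\<sigma> t) \<otimes>\<^bsub>Q\<^esub> \<sigma> a) \<and>
     {a \<in> carrier A. \<sigma> a = \<zero>\<^bsub>Q\<^esub>} = ass_l A T"

end

theory Submission
  imports Defs
begin

text \<open>Every ring map inverting \<open>S\<close> factors through \<open>R\<langle>S\<^sup>-\<^sup>1\<rangle>\<close>, and the left Ore condition
  brings every element of \<open>R\<langle>S\<^sup>-\<^sup>1\<rangle>\<close> to the form \<open>x\<^sub>s r\<close>.  Since \<open>S\<close> becomes invertible, the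
  kernel \<open>\<aa> = ass\<^sub>R(S)\<close> satisfies \<open>r s \<in> \<aa> \<Longrightarrow> r \<in> \<aa>\<close> and \<open>s r \<in> \<aa> \<Longrightarrow> r \<in> \<aa>\<close>; the first
  gives \<open>'\<aa> \<subseteq> \<aa>\<close>, the second \<open>'\<pi>\<^sup>-\<^sup>1(ass\<^sub>l('S)) \<subseteq> \<aa>\<close>.  For the reverse inclusion, \<open>'S\<close> is a
  left Ore set of left regular elements of \<open>'R\<close>, so the Ore localization \<open>'S\<^sup>-\<^sup>1'R\<close> exists (it
  is built below as a ring of germs); its kernel is \<open>ass\<^sub>l('S)\<close> and \<open>R\<langle>S\<^sup>-\<^sup>1\<rangle>\<close> maps to it.
  Hence \<open>R\<langle>S\<^sup>-\<^sup>1\<rangle> \<noteq> 0\<close> iff \<open>'\<aa> \<noteq> R\<close>, and the canonical map from \<open>R\<langle>S\<^sup>-\<^sup>1\<rangle>\<close> to any Ore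
  localization \<open>'S\<^sup>-\<^sup>1'R\<close> is onto (both consist of left fractions) and injective by the kernel
  computation.\<close>

section \<open>The universal localization as a ring\<close>

context
  fixes R :: "('a, 'm) ring_scheme" and S :: "'a set"
begin

lemma loc_class_eq_iff: "loc_class R S t = loc_class R S u \<longleftrightarrow> loc_rel R S t u"
proof
  assume "loc_class R S t = loc_class R S u"
  then show "loc_rel R S t u" by (metis loc_class_def loc_rel.refl mem_Collect_eq)
qed (auto simp: loc_class_def intro: loc_rel.sym loc_rel.trans)

lemma loc_rel_rep: "loc_rel R S t (rep (loc_class R S t))"
proof -
  have "t \<in> loc_class R S t" by (simp add: loc_class_def loc_rel.refl)
  then have "rep (loc_class R S t) \<in> loc_class R S t" unfolding rep_def by (rule someI)
  then show ?thesis by (simp add: loc_class_def)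
qed

lemma univ_loc_mult:
  "loc_class R S t \<otimes>\<^bsub>univ_loc R S\<^esub> loc_class R S u = loc_class R S (TMul t u)"
  by (simp add: univ_loc_def loc_class_eq_iff loc_rel.cong_mul loc_rel.sym loc_rel_rep)

lemma univ_loc_add:
  "loc_class R S t \<oplus>\<^bsub>univ_loc R S\<^esub> loc_class R S u = loc_class R S (TAdd t u)"
  by (simp add: univ_loc_def loc_class_eq_iff loc_rel.cong_add loc_rel.sym loc_rel_rep)

lemma univ_loc_one: "\<one>\<^bsub>univ_loc R S\<^esub> = loc_class R S TOne"
  and univ_loc_zero: "\<zero>\<^bsub>univ_loc R S\<^esub> = loc_class R S TZero"
  and univ_loc_carrier: "carrier (univ_loc R S) = loc_class R S ` {t. wf_rterm R S t}"
  by (simp_all add: univ_loc_def)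

lemma ring_univ_loc: "ring (univ_loc R S)"
proof (intro ringI abelian_groupI monoidI)
  fix x assume "x \<in> carrier (univ_loc R S)"
  then obtain t where "wf_rterm R S t" "x = loc_class R S t" by (auto simp: univ_loc_carrier)
  then show "\<exists>y\<in>carrier (univ_loc R S). y \<oplus>\<^bsub>univ_loc R S\<^esub> x = \<zero>\<^bsub>univ_loc R S\<^esub>"
    by (intro bexI[of _ "loc_class R S (TNeg t)"])
      (auto simp: univ_loc_add univ_loc_zero univ_loc_carrier loc_class_eq_iff intro: loc_rel.add_neg)
qed (clarsimp simp: univ_loc_carrier;
     force simp: univ_loc_add univ_loc_mult univ_loc_one univ_loc_zero loc_class_eq_iff
       intro: loc_rel.add_assoc loc_rel.add_comm loc_rel.add_zero loc_rel.mul_assoc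
       loc_rel.mul_one_l loc_rel.mul_one_r loc_rel.distr_l loc_rel.distr_r)+

end

lemma loc_map_ring_hom: "ring R \<Longrightarrow> loc_map R S \<in> ring_hom R (univ_loc R S)"
  by (rule ring_hom_memI)
    (auto simp: loc_map_def univ_loc_carrier univ_loc_mult univ_loc_add univ_loc_one loc_class_eq_iff
      intro: loc_rel.r_mul loc_rel.r_add loc_rel.r_one)

lemma loc_x_closed: "s \<in> S \<Longrightarrow> loc_x R S s \<in> carrier (univ_loc R S)"
  by (auto simp: loc_x_def univ_loc_carrier)

lemma
  assumes "ring R" "S \<subseteq> carrier R" "s \<in> S"
  shows loc_map_Units: "loc_map R S s \<in> Units (univ_loc R S)"
    and inv_loc_map: "inv\<^bsub>univ_loc R S\<^esub> (loc_map R S s) = loc_x R S s"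
proof -
  interpret L: ring "univ_loc R S" by (rule ring_univ_loc)
  have closed: "loc_map R S s \<in> carrier (univ_loc R S)" "loc_x R S s \<in> carrier (univ_loc R S)"
    using assms loc_map_ring_hom[of R S] loc_x_closed[of s S R] by (auto simp: ring_hom_def)
  have "loc_map R S s \<otimes>\<^bsub>univ_loc R S\<^esub> loc_x R S s = \<one>\<^bsub>univ_loc R S\<^esub>"
    and "loc_x R S s \<otimes>\<^bsub>univ_loc R S\<^esub> loc_map R S s = \<one>\<^bsub>univ_loc R S\<^esub>"
    using assms by (simp_all add: loc_map_def loc_x_def univ_loc_mult univ_loc_one loc_class_eq_iff
        loc_rel.inv_l loc_rel.inv_r)
  with closed show "loc_map R S s \<in> Units (univ_loc R S)"
    and "inv\<^bsub>univ_loc R S\<^esub> (loc_map R S s) = loc_x R S s"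
    by (auto simp: Units_def L.inv_char)
qed

section \<open>The universal property\<close>

fun eval_rterm ::
  "('a, 'm) ring_scheme \<Rightarrow> 'a set \<Rightarrow> ('b, 'n) ring_scheme \<Rightarrow> ('a \<Rightarrow> 'b) \<Rightarrow> 'a rterm \<Rightarrow> 'b"
where
  "eval_rterm R S Q f (RC r) = (if r \<in> carrier R then f r else \<zero>\<^bsub>Q\<^esub>)"
| "eval_rterm R S Q f (TX s) = (if s \<in> S then inv\<^bsub>Q\<^esub> (f s) else \<zero>\<^bsub>Q\<^esub>)"
| "eval_rterm R S Q f TZero = \<zero>\<^bsub>Q\<^esub>"
| "eval_rterm R S Q f TOne = \<one>\<^bsub>Q\<^esub>"
| "eval_rterm R S Q f (TAdd a b) = eval_rterm R S Q f a \<oplus>\<^bsub>Q\<^esub> eval_rterm R S Q f b"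
| "eval_rterm R S Q f (TNeg a) = \<ominus>\<^bsub>Q\<^esub> eval_rterm R S Q f a"
| "eval_rterm R S Q f (TMul a b) = eval_rterm R S Q f a \<otimes>\<^bsub>Q\<^esub> eval_rterm R S Q f b"

context
  fixes R :: "('a, 'm) ring_scheme" and S :: "'a set"
    and Q :: "('b, 'n) ring_scheme" and f :: "'a \<Rightarrow> 'b"
  assumes ring_Q: "ring Q" and f_hom: "f \<in> ring_hom R Q" and f_Units: "\<And>s. s \<in> S \<Longrightarrow> f s \<in> Units Q"
begin

interpretation Q: ring Q by (fact ring_Q)

lemma eval_rterm_closed: "eval_rterm R S Q f t \<in> carrier Q"
  by (induction t) (use f_hom f_Units in \<open>auto simp: ring_hom_def\<close>)

lemma eval_rterm_loc_rel:
  assumes "ring R" "S \<subseteq> carrier R" and "loc_rel R S t u"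
  shows "eval_rterm R S Q f t = eval_rterm R S Q f u"
  using assms(3)
proof (induction rule: loc_rel.induct)
  case (add_assoc a b c) show ?case by (simp add: Q.a_assoc eval_rterm_closed)
next
  case (add_comm a b) show ?case by (simp add: Q.a_comm eval_rterm_closed)
next
  case (add_neg a) show ?case by (simp add: Q.l_neg eval_rterm_closed)
next
  case (mul_assoc a b c) show ?case by (simp add: Q.m_assoc eval_rterm_closed)
next
  case (distr_l a b c) show ?case by (simp add: Q.r_distr eval_rterm_closed)
next
  case (distr_r a b c) show ?case by (simp add: Q.l_distr eval_rterm_closed)
qed (use assms(2) f_hom f_Units ring.ring_simprules[OF assms(1)] in
      \<open>auto simp: eval_rterm_closed ring_hom_add ring_hom_mult ring_hom_one\<close>)

lemma univ_loc_universal: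
  assumes "ring R" "S \<subseteq> carrier R"
  shows "\<exists>g \<in> ring_hom (univ_loc R S) Q. (\<forall>r\<in>carrier R. g (loc_map R S r) = f r) \<and>
           (\<forall>s\<in>S. g (loc_x R S s) = inv\<^bsub>Q\<^esub> (f s))"
proof -
  define g where "g A = eval_rterm R S Q f (rep A)" for A
  have g_class: "g (loc_class R S t) = eval_rterm R S Q f t" for t
    unfolding g_def by (metis assms eval_rterm_loc_rel loc_rel.sym loc_rel_rep)
  have "g \<in> ring_hom (univ_loc R S) Q"
    by (rule ring_hom_memI)
      (auto simp: univ_loc_carrier univ_loc_mult univ_loc_add univ_loc_one g_class eval_rterm_closed)
  then show ?thesis by (intro bexI[of _ g]) (auto simp: loc_map_def loc_x_def g_class)
qed

end

section \<open>Left fractions\<close>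

lemma left_ore_setD:
  assumes "left_ore_set R S"
  shows "S \<subseteq> carrier R" "\<one>\<^bsub>R\<^esub> \<in> S" "\<zero>\<^bsub>R\<^esub> \<notin> S" "\<And>s t. s \<in> S \<Longrightarrow> t \<in> S \<Longrightarrow> s \<otimes>\<^bsub>R\<^esub> t \<in> S"
    "\<And>r s. r \<in> carrier R \<Longrightarrow> s \<in> S \<Longrightarrow> \<exists>t\<in>S. \<exists>r'\<in>carrier R. t \<otimes>\<^bsub>R\<^esub> r = r' \<otimes>\<^bsub>R\<^esub> s"
  using assms unfolding left_ore_set_def mult_set_def by blast+

lemma (in monoid) Units_inv_mult:
  assumes "x \<in> Units G" "y \<in> Units G"
  shows "inv (x \<otimes> y) = inv y \<otimes> inv x"
  using group.inv_mult_group[OF units_group, of x y] assms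
  by (simp add: units_of_carrier units_of_mult units_of_inv Units_closed)

lemma (in ring) Units_mult_eq_zero:
  assumes "u \<in> Units R" "x \<in> carrier R"
  shows "u \<otimes> x = \<zero> \<longleftrightarrow> x = \<zero>" "x \<otimes> u = \<zero> \<longleftrightarrow> x = \<zero>"
proof -
  have "x = inv u \<otimes> (u \<otimes> x)"
    using assms by (simp add: m_assoc[symmetric] Units_closed)
  moreover have "x = (x \<otimes> u) \<otimes> inv u"
    using assms by (simp add: m_assoc Units_closed)
  ultimately show "u \<otimes> x = \<zero> \<longleftrightarrow> x = \<zero>" "x \<otimes> u = \<zero> \<longleftrightarrow> x = \<zero>"
    using assms by (metis Units_closed Units_inv_closed l_null r_null)+
qed

locale ore_inverting_hom = ring_hom_ring R L h for R (structure) and L (structure) and h +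
  fixes T :: "'a set"
  assumes T_closed: "T \<subseteq> carrier R" and T_one: "\<one> \<in> T"
    and T_mult: "\<And>s t. s \<in> T \<Longrightarrow> t \<in> T \<Longrightarrow> s \<otimes> t \<in> T"
    and T_ore: "\<And>r s. r \<in> carrier R \<Longrightarrow> s \<in> T \<Longrightarrow> \<exists>t\<in>T. \<exists>r'\<in>carrier R. t \<otimes> r = r' \<otimes> s"
    and hom_T_Units: "\<And>t. t \<in> T \<Longrightarrow> h t \<in> Units L"
begin

definition left_fractions :: "'c set" where
  "left_fractions = {inv\<^bsub>L\<^esub> (h t) \<otimes>\<^bsub>L\<^esub> h a | t a. t \<in> T \<and> a \<in> carrier R}"

lemma T_carrier: "t \<in> T \<Longrightarrow> t \<in> carrier R"
  using T_closed by auto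

lemma inv_hom_closed: "t \<in> T \<Longrightarrow> inv\<^bsub>L\<^esub> (h t) \<in> carrier L"
  using hom_T_Units by (simp add: S.Units_inv_closed)

lemma inv_hom_swap:
  assumes "u \<in> T" "t \<in> T" "a \<in> carrier R" "v \<in> carrier R" "u \<otimes> a = v \<otimes> t"
  shows "h a \<otimes>\<^bsub>L\<^esub> inv\<^bsub>L\<^esub> (h t) = inv\<^bsub>L\<^esub> (h u) \<otimes>\<^bsub>L\<^esub> h v"
proof -
  have U: "h u \<in> Units L" "h t \<in> Units L" and C: "u \<in> carrier R" "t \<in> carrier R"
    using assms hom_T_Units T_carrier by auto
  have "h a = inv\<^bsub>L\<^esub> (h u) \<otimes>\<^bsub>L\<^esub> h (u \<otimes> a)"
    using U C assms(3) by (simp add: S.m_assoc[symmetric] S.Units_closed)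
  also have "\<dots> = inv\<^bsub>L\<^esub> (h u) \<otimes>\<^bsub>L\<^esub> h v \<otimes>\<^bsub>L\<^esub> h t"
    using U C assms(4,5) by (simp add: S.m_assoc S.Units_closed)
  finally show ?thesis
    using U C assms(4) by (simp add: S.m_assoc S.Units_closed)
qed

lemma left_fractionsI: "t \<in> T \<Longrightarrow> a \<in> carrier R \<Longrightarrow> inv\<^bsub>L\<^esub> (h t) \<otimes>\<^bsub>L\<^esub> h a \<in> left_fractions"
  unfolding left_fractions_def by blast

lemma hom_in_left_fractions: "a \<in> carrier R \<Longrightarrow> h a \<in> left_fractions"
  using left_fractionsI[OF T_one] by simp

lemma inv_hom_in_left_fractions: "t \<in> T \<Longrightarrow> inv\<^bsub>L\<^esub> (h t) \<in> left_fractions"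
  using left_fractionsI[of t \<one>] inv_hom_closed by simp

lemma left_fractions_add:
  assumes "x \<in> left_fractions" "y \<in> left_fractions"
  shows "x \<oplus>\<^bsub>L\<^esub> y \<in> left_fractions"
proof -
  obtain s a t b where x: "s \<in> T" "a \<in> carrier R" "x = inv\<^bsub>L\<^esub> (h s) \<otimes>\<^bsub>L\<^esub> h a"
    and y: "t \<in> T" "b \<in> carrier R" "y = inv\<^bsub>L\<^esub> (h t) \<otimes>\<^bsub>L\<^esub> h b"
    using assms unfolding left_fractions_def by blast
  obtain u v where uv: "u \<in> T" "v \<in> carrier R" "u \<otimes> s = v \<otimes> t"
    using T_ore[OF T_carrier[OF x(1)] y(1)] by blast
  have U: "h u \<in> Units L" "h s \<in> Units L" and C: "u \<in> carrier R" "s \<in> carrier R"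
    using uv x hom_T_Units T_carrier by auto
  have "inv\<^bsub>L\<^esub> (h (u \<otimes> s)) \<otimes>\<^bsub>L\<^esub> h u = inv\<^bsub>L\<^esub> (h s)"
    using U C by (simp add: S.Units_inv_mult S.m_assoc S.Units_closed)
  moreover have "inv\<^bsub>L\<^esub> (h (u \<otimes> s)) \<otimes>\<^bsub>L\<^esub> h v = inv\<^bsub>L\<^esub> (h t)"
  proof -
    have "inv\<^bsub>L\<^esub> (h (u \<otimes> s)) \<otimes>\<^bsub>L\<^esub> h v = inv\<^bsub>L\<^esub> (h s) \<otimes>\<^bsub>L\<^esub> (inv\<^bsub>L\<^esub> (h u) \<otimes>\<^bsub>L\<^esub> h v)"
      using U C uv(2) by (simp add: S.Units_inv_mult S.m_assoc S.Units_closed)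
    also have "\<dots> = inv\<^bsub>L\<^esub> (h t)"
      using U C inv_hom_closed[OF y(1)]
      by (simp add: inv_hom_swap[OF uv(1) y(1) C(2) uv(2,3), symmetric] S.m_assoc[symmetric] S.Units_closed)
    finally show ?thesis .
  qed
  ultimately have "inv\<^bsub>L\<^esub> (h (u \<otimes> s)) \<otimes>\<^bsub>L\<^esub> h (u \<otimes> a \<oplus> v \<otimes> b) = x \<oplus>\<^bsub>L\<^esub> y"
    using x y uv C inv_hom_closed[OF T_mult[OF uv(1) x(1)]]
    by (simp add: S.r_distr S.m_assoc[symmetric])
  then show ?thesis
    using left_fractionsI[OF T_mult[OF uv(1) x(1)], of "u \<otimes> a \<oplus> v \<otimes> b"] x y uv C by simp
qed

lemma left_fractions_mult:
  assumes "x \<in> left_fractions" "y \<in> left_fractions"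
  shows "x \<otimes>\<^bsub>L\<^esub> y \<in> left_fractions"
proof -
  obtain s a t b where x: "s \<in> T" "a \<in> carrier R" "x = inv\<^bsub>L\<^esub> (h s) \<otimes>\<^bsub>L\<^esub> h a"
    and y: "t \<in> T" "b \<in> carrier R" "y = inv\<^bsub>L\<^esub> (h t) \<otimes>\<^bsub>L\<^esub> h b"
    using assms unfolding left_fractions_def by blast
  obtain u v where uv: "u \<in> T" "v \<in> carrier R" "u \<otimes> a = v \<otimes> t"
    using T_ore[OF x(2) y(1)] by blast
  have "x \<otimes>\<^bsub>L\<^esub> y = inv\<^bsub>L\<^esub> (h s) \<otimes>\<^bsub>L\<^esub> (h a \<otimes>\<^bsub>L\<^esub> inv\<^bsub>L\<^esub> (h t)) \<otimes>\<^bsub>L\<^esub> h b"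
    using x y inv_hom_closed by (simp add: S.m_assoc)
  also have "\<dots> = inv\<^bsub>L\<^esub> (h (u \<otimes> s)) \<otimes>\<^bsub>L\<^esub> h (v \<otimes> b)"
    using x y uv inv_hom_closed T_carrier hom_T_Units
    by (simp add: inv_hom_swap[OF uv(1) y(1) x(2) uv(2,3)] S.Units_inv_mult S.m_assoc)
  finally show ?thesis
    using left_fractionsI[OF T_mult[OF uv(1) x(1)], of "v \<otimes> b"] y uv by simp
qed

lemma left_fractions_neg:
  assumes "x \<in> left_fractions"
  shows "\<ominus>\<^bsub>L\<^esub> x \<in> left_fractions"
proof -
  obtain t a where "t \<in> T" "a \<in> carrier R" "x = inv\<^bsub>L\<^esub> (h t) \<otimes>\<^bsub>L\<^esub> h a"
    using assms unfolding left_fractions_def by blast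
  then show ?thesis
    using left_fractionsI[of t "\<ominus> a"] inv_hom_closed by (simp add: S.r_minus)
qed

end

lemma ore_inverting_hom_loc_map:
  assumes "ring R" "left_ore_set R S"
  shows "ore_inverting_hom R (univ_loc R S) (loc_map R S) S"
proof -
  interpret ring_hom_ring R "univ_loc R S" "loc_map R S"
    by (rule ring_hom_ringI2[OF assms(1) ring_univ_loc loc_map_ring_hom[OF assms(1)]])
  show ?thesis
    by unfold_locales (use left_ore_setD[OF assms(2)] loc_map_Units[OF assms(1)] in auto)
qed

lemma univ_loc_left_fraction:
  assumes "ring R" "left_ore_set R S" "q \<in> carrier (univ_loc R S)"
  shows "\<exists>s\<in>S. \<exists>r\<in>carrier R. q = loc_x R S s \<otimes>\<^bsub>univ_loc R S\<^esub> loc_map R S r"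
proof -
  interpret L: ring "univ_loc R S" by (rule ring_univ_loc)
  interpret F: ore_inverting_hom R "univ_loc R S" "loc_map R S" S
    by (rule ore_inverting_hom_loc_map[OF assms(1,2)])
  have "loc_class R S t \<in> F.left_fractions" if "wf_rterm R S t" for t
    using that
  proof (induction t)
    case (RC r)
    then show ?case using F.hom_in_left_fractions[of r] by (simp flip: loc_map_def)
  next
    case (TX s)
    then show ?case
      using F.inv_hom_in_left_fractions[of s] inv_loc_map[OF assms(1) F.T_closed] by (simp add: loc_x_def)
  next
    case TZero
    then show ?case using F.hom_in_left_fractions[of "\<zero>\<^bsub>R\<^esub>"] by (simp add: univ_loc_zero)
  next
    case TOne
    then show ?case using F.hom_in_left_fractions[of "\<one>\<^bsub>R\<^esub>"] by (simp add: univ_loc_one)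
  next
    case (TAdd a b)
    then show ?case using F.left_fractions_add by (simp flip: univ_loc_add)
  next
    case (TNeg a)
    have "loc_class R S (TNeg a) = \<ominus>\<^bsub>univ_loc R S\<^esub> loc_class R S a"
      by (rule L.minus_equality[symmetric])
        (use TNeg.prems in \<open>auto simp: univ_loc_add univ_loc_zero univ_loc_carrier loc_class_eq_iff
          intro: loc_rel.add_neg\<close>)
    then show ?case using TNeg F.left_fractions_neg by simp
  next
    case (TMul a b)
    then show ?case using F.left_fractions_mult by (simp flip: univ_loc_mult)
  qed
  then show ?thesis
    using assms(3) inv_loc_map[OF assms(1) F.T_closed]
    by (fastforce simp: univ_loc_carrier F.left_fractions_def)
qed

section \<open>Ore localization at a set of left regular elements\<close>

text \<open>For a left Ore set \<open>T\<close> of left regular elements of \<open>A\<close>, the ring \<open>T\<^sup>-\<^sup>1A\<close> is realized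
  as a direct limit of \<open>Hom\<^sub>A(A t, A)\<close>: its elements are germs of maps \<open>f\<close> with \<open>f (x t) = x a\<close>
  for some \<open>t \<in> T\<close> (the fraction \<open>t\<^sup>-\<^sup>1a\<close>), two maps being identified when they agree on some
  \<open>A t\<close>.  Multiplication is composition in reverse order.  Left regularity makes right
  multiplication by \<open>t\<close> injective, so it has a germ inverse.\<close>

locale regular_left_ore = ring A for A (structure) +
  fixes T
  assumes T_closed: "T \<subseteq> carrier A" and T_one: "\<one> \<in> T"
    and T_mult: "\<And>s t. s \<in> T \<Longrightarrow> t \<in> T \<Longrightarrow> s \<otimes> t \<in> T"
    and T_ore: "\<And>r s. r \<in> carrier A \<Longrightarrow> s \<in> T \<Longrightarrow> \<exists>t\<in>T. \<exists>r'\<in>carrier A. t \<otimes> r = r' \<otimes> s"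
    and T_left_reg: "\<And>t x. t \<in> T \<Longrightarrow> x \<in> carrier A \<Longrightarrow> x \<otimes> t = \<zero> \<Longrightarrow> x = \<zero>"
begin

definition ore_eventually :: "('a \<Rightarrow> bool) \<Rightarrow> bool" where
  "ore_eventually P \<longleftrightarrow> (\<exists>t\<in>T. \<forall>x\<in>carrier A. P (x \<otimes> t))"

definition admissible :: "('a \<Rightarrow> 'a) set" where
  "admissible = {f. f \<in> carrier A \<rightarrow> carrier A \<and>
     (\<exists>t\<in>T. \<exists>a\<in>carrier A. \<forall>x\<in>carrier A. f (x \<otimes> t) = x \<otimes> a)}"

definition germ :: "('a \<Rightarrow> 'a) \<Rightarrow> ('a \<Rightarrow> 'a) set" where
  "germ f = {g \<in> admissible. ore_eventually (\<lambda>y. f y = g y)}"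

definition germ_ring :: "('a \<Rightarrow> 'a) set ring" where
  "germ_ring = \<lparr>carrier = germ ` admissible, monoid.mult = (\<lambda>F G. germ (rep G \<circ> rep F)),
     one = germ id, ring.zero = germ (\<lambda>y. \<zero>), ring.add = (\<lambda>F G. germ (\<lambda>y. rep F y \<oplus> rep G y))\<rparr>"

definition germ_hom :: "'a \<Rightarrow> ('a \<Rightarrow> 'a) set" where
  "germ_hom r = germ (\<lambda>y. y \<otimes> r)"

definition right_quot :: "'a \<Rightarrow> 'a \<Rightarrow> 'a" where
  "right_quot t y = (if \<exists>x\<in>carrier A. y = x \<otimes> t then SOME x. x \<in> carrier A \<and> y = x \<otimes> t else \<zero>)"

lemma T_carrier: "t \<in> T \<Longrightarrow> t \<in> carrier A"
  using T_closed by auto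

lemma T_right_cancel:
  assumes "t \<in> T" "x \<in> carrier A" "x' \<in> carrier A" "x \<otimes> t = x' \<otimes> t"
  shows "x = x'"
proof -
  have "(x \<ominus> x') \<otimes> t = \<zero>"
    using assms T_carrier[OF assms(1)] by (simp add: minus_eq l_distr l_minus r_neg)
  then have "x \<ominus> x' = \<zero>"
    using T_left_reg[OF assms(1)] assms(2,3) by simp
  then show ?thesis
    using assms(2,3) by (metis minus_equality add.inv_closed minus_eq r_neg1 minus_minus)
qed

lemma common_left_multiple:
  assumes "t1 \<in> T" "t2 \<in> T"
  obtains t w1 w2 where "t \<in> T" "w1 \<in> carrier A" "w2 \<in> carrier A" "t = w1 \<otimes> t1" "t = w2 \<otimes> t2"
proof -
  obtain u c where "u \<in> T" "c \<in> carrier A" "u \<otimes> t1 = c \<otimes> t2"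
    using T_ore[OF T_carrier[OF assms(1)] assms(2)] by blast
  then show ?thesis
    using that T_mult[OF \<open>u \<in> T\<close> assms(1)] T_carrier by blast
qed

lemma ore_eventually_always: "(\<And>y. y \<in> carrier A \<Longrightarrow> P y) \<Longrightarrow> ore_eventually P"
  unfolding ore_eventually_def using T_one by (intro bexI[of _ \<one>]) auto

lemma ore_eventually_mono:
  assumes "ore_eventually P" "\<And>y. y \<in> carrier A \<Longrightarrow> P y \<Longrightarrow> Q y"
  shows "ore_eventually Q"
  using assms T_carrier unfolding ore_eventually_def by (metis m_closed)

lemma ore_eventually_conj:
  assumes "ore_eventually P" "ore_eventually Q"
  shows "ore_eventually (\<lambda>y. P y \<and> Q y)"
proof -
  obtain t1 t2 where t1: "t1 \<in> T" "\<forall>x\<in>carrier A. P (x \<otimes> t1)"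
    and t2: "t2 \<in> T" "\<forall>x\<in>carrier A. Q (x \<otimes> t2)"
    using assms unfolding ore_eventually_def by blast
  obtain t w1 w2 where w: "t \<in> T" "w1 \<in> carrier A" "w2 \<in> carrier A" "t = w1 \<otimes> t1" "t = w2 \<otimes> t2"
    using common_left_multiple[OF t1(1) t2(1)] .
  have "P (x \<otimes> t) \<and> Q (x \<otimes> t)" if "x \<in> carrier A" for x
  proof -
    have "x \<otimes> t = (x \<otimes> w1) \<otimes> t1" "x \<otimes> t = (x \<otimes> w2) \<otimes> t2"
      using w that t1 t2 T_carrier by (simp_all add: m_assoc)
    then show ?thesis
      using t1(2) t2(2) w(2,3) that by (metis m_closed)
  qed
  then show ?thesis
    unfolding ore_eventually_def using w(1) by blast
qed

lemma ore_eventually_eq_sym: "ore_eventually (\<lambda>y. f y = g y) \<Longrightarrow> ore_eventually (\<lambda>y. g y = f y)"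
  by (erule ore_eventually_mono) simp

lemma ore_eventually_eq_trans:
  "ore_eventually (\<lambda>y. f y = g y) \<Longrightarrow> ore_eventually (\<lambda>y. g y = h y) \<Longrightarrow> ore_eventually (\<lambda>y. f y = h y)"
  by (drule (1) ore_eventually_conj) (erule ore_eventually_mono, simp)

lemma ore_eventually_eq_add:
  "ore_eventually (\<lambda>y. f y = f' y) \<Longrightarrow> ore_eventually (\<lambda>y. g y = g' y) \<Longrightarrow>
    ore_eventually (\<lambda>y. f y \<oplus> g y = f' y \<oplus> g' y)"
  by (drule (1) ore_eventually_conj) (erule ore_eventually_mono, simp)

lemma admissibleI:
  "f \<in> carrier A \<rightarrow> carrier A \<Longrightarrow> t \<in> T \<Longrightarrow> a \<in> carrier A \<Longrightarrow>
    (\<And>x. x \<in> carrier A \<Longrightarrow> f (x \<otimes> t) = x \<otimes> a) \<Longrightarrow> f \<in> admissible"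
  unfolding admissible_def by blast

lemma admissibleE:
  assumes "f \<in> admissible"
  obtains t a where "t \<in> T" "a \<in> carrier A" "\<And>x. x \<in> carrier A \<Longrightarrow> f (x \<otimes> t) = x \<otimes> a"
  using assms unfolding admissible_def by blast

lemma admissible_closed: "f \<in> admissible \<Longrightarrow> y \<in> carrier A \<Longrightarrow> f y \<in> carrier A"
  unfolding admissible_def by auto

lemma admissible_eventually_in:
  assumes "f \<in> admissible" "t' \<in> T"
  shows "ore_eventually (\<lambda>y. \<exists>x\<in>carrier A. f y = x \<otimes> t')"
proof -
  obtain t a where ta: "t \<in> T" "a \<in> carrier A" "\<And>x. x \<in> carrier A \<Longrightarrow> f (x \<otimes> t) = x \<otimes> a"
    using assms(1) by (rule admissibleE) blast
  obtain u c where uc: "u \<in> T" "c \<in> carrier A" "u \<otimes> a = c \<otimes> t'"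
    using T_ore[OF ta(2) assms(2)] by blast
  have "f (x \<otimes> (u \<otimes> t)) = (x \<otimes> c) \<otimes> t'" if "x \<in> carrier A" for x
    using that uc ta T_carrier assms(2) by (simp add: m_assoc[symmetric]) (simp add: m_assoc)
  then show ?thesis
    unfolding ore_eventually_def using T_mult[OF uc(1) ta(1)] uc(2) by blast
qed

lemma admissible_add:
  assumes "f \<in> admissible" "g \<in> admissible"
  shows "(\<lambda>y. f y \<oplus> g y) \<in> admissible"
proof -
  obtain t1 a1 where f: "t1 \<in> T" "a1 \<in> carrier A" "\<And>x. x \<in> carrier A \<Longrightarrow> f (x \<otimes> t1) = x \<otimes> a1"
    using assms(1) by (rule admissibleE) blast
  obtain t2 a2 where g: "t2 \<in> T" "a2 \<in> carrier A" "\<And>x. x \<in> carrier A \<Longrightarrow> g (x \<otimes> t2) = x \<otimes> a2"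
    using assms(2) by (rule admissibleE) blast
  obtain t w1 w2 where w: "t \<in> T" "w1 \<in> carrier A" "w2 \<in> carrier A" "t = w1 \<otimes> t1" "t = w2 \<otimes> t2"
    using common_left_multiple[OF f(1) g(1)] .
  have "f (x \<otimes> t) \<oplus> g (x \<otimes> t) = x \<otimes> (w1 \<otimes> a1 \<oplus> w2 \<otimes> a2)" if "x \<in> carrier A" for x
  proof -
    have "f (x \<otimes> t) = f ((x \<otimes> w1) \<otimes> t1)" "g (x \<otimes> t) = g ((x \<otimes> w2) \<otimes> t2)"
      using w that T_carrier f g by (simp_all add: m_assoc)
    then show ?thesis using f g w that by (simp add: m_assoc r_distr)
  qed
  then show ?thesis
    using assms admissible_closed w f g by (intro admissibleI[of _ t "w1 \<otimes> a1 \<oplus> w2 \<otimes> a2"]) auto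
qed

lemma admissible_neg:
  assumes "f \<in> admissible"
  shows "(\<lambda>y. \<ominus> f y) \<in> admissible"
proof -
  obtain t a where "t \<in> T" "a \<in> carrier A" "\<And>x. x \<in> carrier A \<Longrightarrow> f (x \<otimes> t) = x \<otimes> a"
    using assms by (rule admissibleE) blast
  then show ?thesis
    using assms by (intro admissibleI[of _ t "\<ominus> a"]) (auto simp: admissible_closed r_minus)
qed

lemma admissible_comp:
  assumes "f \<in> admissible" "g \<in> admissible"
  shows "g \<circ> f \<in> admissible"
proof -
  obtain t a where f: "t \<in> T" "a \<in> carrier A" "\<And>x. x \<in> carrier A \<Longrightarrow> f (x \<otimes> t) = x \<otimes> a"
    using assms(1) by (rule admissibleE) blast
  obtain t' a' where g: "t' \<in> T" "a' \<in> carrier A" "\<And>x. x \<in> carrier A \<Longrightarrow> g (x \<otimes> t') = x \<otimes> a'"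
    using assms(2) by (rule admissibleE) blast
  obtain u c where uc: "u \<in> T" "c \<in> carrier A" "u \<otimes> a = c \<otimes> t'"
    using T_ore[OF f(2) g(1)] by blast
  have "f (x \<otimes> (u \<otimes> t)) = (x \<otimes> c) \<otimes> t'" if "x \<in> carrier A" for x
    using that uc f g T_carrier by (simp add: m_assoc[symmetric]) (simp add: m_assoc)
  then have "(g \<circ> f) (x \<otimes> (u \<otimes> t)) = x \<otimes> (c \<otimes> a')" if "x \<in> carrier A" for x
    using that uc g by (simp add: m_assoc)
  then show ?thesis
    using assms admissible_closed T_mult[OF uc(1) f(1)] uc(2) g(2)
    by (intro admissibleI[of _ "u \<otimes> t" "c \<otimes> a'"]) auto
qed

lemma admissible_right_mult: "r \<in> carrier A \<Longrightarrow> (\<lambda>y. y \<otimes> r) \<in> admissible"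
  using T_one by (intro admissibleI[of _ \<one> r]) auto

lemma admissible_id: "id \<in> admissible"
  using T_one by (intro admissibleI[of _ \<one> \<one>]) auto

lemma admissible_zero: "(\<lambda>y. \<zero>) \<in> admissible"
  using T_one by (intro admissibleI[of _ \<one> \<zero>]) auto

lemma right_quot_mult:
  assumes "t \<in> T" "x \<in> carrier A"
  shows "right_quot t (x \<otimes> t) = x"
proof -
  have "(SOME x'. x' \<in> carrier A \<and> x \<otimes> t = x' \<otimes> t) = x"
  proof (rule some_equality)
    show "\<And>x'. x' \<in> carrier A \<and> x \<otimes> t = x' \<otimes> t \<Longrightarrow> x' = x"
      using assms T_right_cancel by metis
  qed (use assms(2) in simp)
  then show ?thesis
    using assms unfolding right_quot_def by auto
qed

lemma admissible_right_quot:
  assumes "t \<in> T"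
  shows "right_quot t \<in> admissible"
proof (rule admissibleI[OF _ assms one_closed])
  show "right_quot t \<in> carrier A \<rightarrow> carrier A"
  proof
    fix y assume "y \<in> carrier A"
    show "right_quot t y \<in> carrier A"
    proof (cases "\<exists>x\<in>carrier A. y = x \<otimes> t")
      case True
      then show ?thesis using right_quot_mult[OF assms] by auto
    qed (simp add: right_quot_def)
  qed
qed (simp add: assms right_quot_mult)

lemma ore_eventually_eq_comp:
  assumes "f \<in> admissible" "ore_eventually (\<lambda>y. f y = f' y)" "ore_eventually (\<lambda>y. g y = g' y)"
  shows "ore_eventually (\<lambda>y. (g \<circ> f) y = (g' \<circ> f') y)"
proof -
  obtain t where t: "t \<in> T" "\<forall>x\<in>carrier A. g (x \<otimes> t) = g' (x \<otimes> t)"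
    using assms(3) unfolding ore_eventually_def by blast
  show ?thesis
    using ore_eventually_conj[OF admissible_eventually_in[OF assms(1) t(1)] assms(2)]
    by (rule ore_eventually_mono) (use t(2) in auto)
qed

text \<open>Right distributivity holds only up to germs: \<open>h\<close> is additive on some \<open>A t\<close>, into which
  both \<open>f\<close> and \<open>g\<close> eventually map.\<close>

lemma ore_eventually_comp_add:
  assumes "f \<in> admissible" "g \<in> admissible" "h \<in> admissible"
  shows "ore_eventually (\<lambda>y. h (f y \<oplus> g y) = h (f y) \<oplus> h (g y))"
proof -
  obtain t a where h: "t \<in> T" "a \<in> carrier A" "\<And>x. x \<in> carrier A \<Longrightarrow> h (x \<otimes> t) = x \<otimes> a"
    using assms(3) by (rule admissibleE) blast
  have "h (x1 \<otimes> t \<oplus> x2 \<otimes> t) = h (x1 \<otimes> t) \<oplus> h (x2 \<otimes> t)"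
    if "x1 \<in> carrier A" "x2 \<in> carrier A" for x1 x2
    using that h T_carrier by (simp add: l_distr[symmetric])
  then show ?thesis
    using ore_eventually_conj[OF admissible_eventually_in[OF assms(1) h(1)]
        admissible_eventually_in[OF assms(2) h(1)]]
    by (auto elim!: ore_eventually_mono)
qed

lemma germ_self: "f \<in> admissible \<Longrightarrow> f \<in> germ f"
  unfolding germ_def by (auto intro: ore_eventually_always)

lemma germ_eq_iff:
  assumes "f \<in> admissible" "g \<in> admissible"
  shows "germ f = germ g \<longleftrightarrow> ore_eventually (\<lambda>y. f y = g y)"
proof
  assume "germ f = germ g"
  then have "g \<in> germ f"
    using germ_self[OF assms(2)] by simp
  then show "ore_eventually (\<lambda>y. f y = g y)"
    unfolding germ_def by simp
next
  assume "ore_eventually (\<lambda>y. f y = g y)"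
  then show "germ f = germ g"
    unfolding germ_def using ore_eventually_eq_sym ore_eventually_eq_trans by blast
qed

lemma germ_eqI:
  "f \<in> admissible \<Longrightarrow> g \<in> admissible \<Longrightarrow> (\<And>y. y \<in> carrier A \<Longrightarrow> f y = g y) \<Longrightarrow> germ f = germ g"
  by (simp add: germ_eq_iff ore_eventually_always)

lemma rep_germ:
  assumes "f \<in> admissible"
  shows "rep (germ f) \<in> admissible" "ore_eventually (\<lambda>y. rep (germ f) y = f y)"
proof -
  have "rep (germ f) \<in> germ f"
    unfolding rep_def using germ_self[OF assms] by (rule someI[of "\<lambda>g. g \<in> germ f"])
  then show "rep (germ f) \<in> admissible" "ore_eventually (\<lambda>y. rep (germ f) y = f y)"
    unfolding germ_def using ore_eventually_eq_sym by auto
qed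

lemma germ_ring_carrier: "carrier germ_ring = germ ` admissible"
  and germ_ring_one: "\<one>\<^bsub>germ_ring\<^esub> = germ id"
  and germ_ring_zero: "\<zero>\<^bsub>germ_ring\<^esub> = germ (\<lambda>y. \<zero>)"
  by (simp_all add: germ_ring_def)

lemma germ_ring_add:
  assumes "f \<in> admissible" "g \<in> admissible"
  shows "germ f \<oplus>\<^bsub>germ_ring\<^esub> germ g = germ (\<lambda>y. f y \<oplus> g y)"
  using ore_eventually_eq_add[OF rep_germ(2)[OF assms(1)] rep_germ(2)[OF assms(2)]]
  by (simp add: germ_ring_def germ_eq_iff admissible_add assms rep_germ(1))

lemma germ_ring_mult:
  assumes "f \<in> admissible" "g \<in> admissible"
  shows "germ f \<otimes>\<^bsub>germ_ring\<^esub> germ g = germ (g \<circ> f)"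
  using ore_eventually_eq_comp[OF rep_germ(1)[OF assms(1)] rep_germ(2)[OF assms(1)] rep_germ(2)[OF assms(2)]]
  by (simp add: germ_ring_def germ_eq_iff admissible_comp assms rep_germ(1))

lemma ring_germ_ring: "ring germ_ring"
proof (intro ringI abelian_groupI monoidI)
  show "\<zero>\<^bsub>germ_ring\<^esub> \<in> carrier germ_ring" "\<one>\<^bsub>germ_ring\<^esub> \<in> carrier germ_ring"
    by (simp_all add: germ_ring_carrier germ_ring_zero germ_ring_one admissible_zero admissible_id)
next
  fix x y assume "x \<in> carrier germ_ring" "y \<in> carrier germ_ring"
  then show "x \<oplus>\<^bsub>germ_ring\<^esub> y \<in> carrier germ_ring" "x \<otimes>\<^bsub>germ_ring\<^esub> y \<in> carrier germ_ring"
    by (auto simp: germ_ring_carrier germ_ring_add germ_ring_mult admissible_add admissible_comp)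
next
  fix x assume "x \<in> carrier germ_ring"
  then obtain f where f: "f \<in> admissible" "x = germ f" by (auto simp: germ_ring_carrier)
  then show "\<zero>\<^bsub>germ_ring\<^esub> \<oplus>\<^bsub>germ_ring\<^esub> x = x"
    by (simp add: germ_ring_zero germ_ring_add admissible_zero)
      (rule germ_eqI, simp_all add: admissible_add admissible_zero admissible_closed)
  show "\<one>\<^bsub>germ_ring\<^esub> \<otimes>\<^bsub>germ_ring\<^esub> x = x" "x \<otimes>\<^bsub>germ_ring\<^esub> \<one>\<^bsub>germ_ring\<^esub> = x"
    using f by (simp_all add: germ_ring_one germ_ring_mult admissible_id)
  have "germ (\<lambda>y. \<ominus> f y) \<oplus>\<^bsub>germ_ring\<^esub> x = \<zero>\<^bsub>germ_ring\<^esub>"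
    using f by (simp add: germ_ring_zero germ_ring_add admissible_neg)
      (rule germ_eqI, simp_all add: admissible_add admissible_neg admissible_zero admissible_closed l_neg)
  then show "\<exists>y\<in>carrier germ_ring. y \<oplus>\<^bsub>germ_ring\<^esub> x = \<zero>\<^bsub>germ_ring\<^esub>"
    using f admissible_neg by (auto simp: germ_ring_carrier)
next
  fix x y assume "x \<in> carrier germ_ring" "y \<in> carrier germ_ring"
  then obtain f g where "f \<in> admissible" "g \<in> admissible" "x = germ f" "y = germ g"
    by (auto simp: germ_ring_carrier)
  then show "x \<oplus>\<^bsub>germ_ring\<^esub> y = y \<oplus>\<^bsub>germ_ring\<^esub> x"
    by (simp add: germ_ring_add) (rule germ_eqI, simp_all add: admissible_add admissible_closed a_comm)
next
  fix x y z assume "x \<in> carrier germ_ring" "y \<in> carrier germ_ring" "z \<in> carrier germ_ring"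
  then obtain f g h where fgh: "f \<in> admissible" "g \<in> admissible" "h \<in> admissible"
    and xyz: "x = germ f" "y = germ g" "z = germ h"
    by (auto simp: germ_ring_carrier)
  then show "x \<oplus>\<^bsub>germ_ring\<^esub> y \<oplus>\<^bsub>germ_ring\<^esub> z = x \<oplus>\<^bsub>germ_ring\<^esub> (y \<oplus>\<^bsub>germ_ring\<^esub> z)"
    by (simp add: germ_ring_add admissible_add)
      (rule germ_eqI, simp_all add: admissible_add admissible_closed a_assoc)
  show "x \<otimes>\<^bsub>germ_ring\<^esub> y \<otimes>\<^bsub>germ_ring\<^esub> z = x \<otimes>\<^bsub>germ_ring\<^esub> (y \<otimes>\<^bsub>germ_ring\<^esub> z)"
    using fgh xyz by (simp add: germ_ring_mult admissible_comp comp_assoc)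
  show "z \<otimes>\<^bsub>germ_ring\<^esub> (x \<oplus>\<^bsub>germ_ring\<^esub> y) = z \<otimes>\<^bsub>germ_ring\<^esub> x \<oplus>\<^bsub>germ_ring\<^esub> z \<otimes>\<^bsub>germ_ring\<^esub> y"
    using fgh xyz
    by (simp only: germ_ring_add germ_ring_mult admissible_add admissible_comp) (simp add: comp_def)
  have "h \<circ> (\<lambda>y. f y \<oplus> g y) \<in> admissible" "(\<lambda>y. h (f y) \<oplus> h (g y)) \<in> admissible"
    using admissible_add[OF admissible_comp[OF fgh(1,3)] admissible_comp[OF fgh(2,3)]]
    by (simp_all add: fgh admissible_add admissible_comp)
  then show "(x \<oplus>\<^bsub>germ_ring\<^esub> y) \<otimes>\<^bsub>germ_ring\<^esub> z = x \<otimes>\<^bsub>germ_ring\<^esub> z \<oplus>\<^bsub>germ_ring\<^esub> y \<otimes>\<^bsub>germ_ring\<^esub> z"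
    using fgh xyz ore_eventually_comp_add[OF fgh]
    by (simp add: germ_ring_add germ_ring_mult admissible_add admissible_comp germ_eq_iff)
qed

lemma germ_hom_ring_hom: "germ_hom \<in> ring_hom A germ_ring"
proof (rule ring_hom_memI)
  fix x y assume "x \<in> carrier A" "y \<in> carrier A"
  then show "germ_hom (x \<otimes> y) = germ_hom x \<otimes>\<^bsub>germ_ring\<^esub> germ_hom y"
    and "germ_hom (x \<oplus> y) = germ_hom x \<oplus>\<^bsub>germ_ring\<^esub> germ_hom y"
    by (simp_all add: germ_hom_def germ_ring_mult germ_ring_add admissible_right_mult)
      (rule germ_eqI; auto simp: admissible_right_mult admissible_comp admissible_add m_assoc r_distr)+
next
  show "germ_hom \<one> = \<one>\<^bsub>germ_ring\<^esub>"
    by (simp add: germ_hom_def germ_ring_one) (rule germ_eqI, simp_all add: admissible_right_mult admissible_id)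
qed (simp add: germ_hom_def germ_ring_carrier admissible_right_mult)

lemma germ_hom_Units:
  assumes "t \<in> T"
  shows "germ_hom t \<in> Units germ_ring"
proof -
  have adm: "(\<lambda>y. y \<otimes> t) \<in> admissible" "right_quot t \<in> admissible"
    using assms T_carrier admissible_right_mult admissible_right_quot by auto
  have "germ_hom t \<otimes>\<^bsub>germ_ring\<^esub> germ (right_quot t) = \<one>\<^bsub>germ_ring\<^esub>"
    using assms adm by (simp add: germ_hom_def germ_ring_mult germ_ring_one)
      (rule germ_eqI, auto simp: admissible_comp admissible_id right_quot_mult T_carrier)
  moreover have "germ (right_quot t) \<otimes>\<^bsub>germ_ring\<^esub> germ_hom t = \<one>\<^bsub>germ_ring\<^esub>"
    using assms adm unfolding germ_hom_def germ_ring_mult[OF adm(2,1)] germ_ring_one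
    by (auto simp: germ_eq_iff admissible_comp admissible_id ore_eventually_def right_quot_mult
        intro!: bexI[of _ t])
  ultimately show ?thesis
    using adm unfolding Units_def germ_hom_def germ_ring_carrier by blast
qed

lemma germ_hom_eq_zero_iff:
  assumes "a \<in> carrier A"
  shows "germ_hom a = \<zero>\<^bsub>germ_ring\<^esub> \<longleftrightarrow> a \<in> ass_l A T"
proof -
  have "germ_hom a = \<zero>\<^bsub>germ_ring\<^esub> \<longleftrightarrow> (\<exists>t\<in>T. \<forall>x\<in>carrier A. x \<otimes> t \<otimes> a = \<zero>)"
    using assms
    by (simp add: germ_hom_def germ_ring_zero germ_eq_iff admissible_right_mult admissible_zero
        ore_eventually_def)
  also have "\<dots> \<longleftrightarrow> (\<exists>t\<in>T. t \<otimes> a = \<zero>)"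
    using assms T_carrier by (metis l_one one_closed m_assoc r_null)
  finally show ?thesis
    using assms by (simp add: ass_l_def)
qed

end

section \<open>The ideal \<open>'\<aa>(S)\<close>\<close>

definition left_reg_mod :: "('a, 'm) ring_scheme \<Rightarrow> 'a set \<Rightarrow> 'a set \<Rightarrow> bool" where
  "left_reg_mod R S c \<longleftrightarrow> (\<forall>s\<in>S. \<forall>y\<in>carrier R. y \<otimes>\<^bsub>R\<^esub> s \<in> c \<longrightarrow> y \<in> c)"

lemma qproj_ring_hom: "ideal c R \<Longrightarrow> qproj R c \<in> ring_hom R (R Quot c)"
  unfolding qproj_def[abs_def] by (rule ideal.rcos_ring_hom)

lemma carrier_quotient_qproj: "carrier (R Quot c) = qproj R c ` carrier R"
  by (auto simp: qproj_def FactRing_def A_RCOSETS_def')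

lemma qproj_eq_zero_iff:
  assumes "ideal c R" "r \<in> carrier R"
  shows "qproj R c r = \<zero>\<^bsub>R Quot c\<^esub> \<longleftrightarrow> r \<in> c"
  using assms ideal.rcos_const_imp_mem ring.a_rcos_zero[OF ideal.axioms(2)[OF assms(1)]]
  by (auto simp: qproj_def FactRing_def)

lemma qproj_left_reg_iff:
  assumes "ideal c R" "s \<in> carrier R"
  shows "qproj R c s \<in> left_reg (R Quot c) \<longleftrightarrow> (\<forall>y\<in>carrier R. y \<otimes>\<^bsub>R\<^esub> s \<in> c \<longrightarrow> y \<in> c)"
proof -
  interpret ring R using assms(1) by (rule ideal.axioms(2))
  have "qproj R c y \<otimes>\<^bsub>R Quot c\<^esub> qproj R c s = qproj R c (y \<otimes>\<^bsub>R\<^esub> s)" if "y \<in> carrier R" for y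
    using ring_hom_mult[OF qproj_ring_hom[OF assms(1)] that assms(2)] by simp
  then show ?thesis
    using assms by (auto simp: left_reg_def carrier_quotient_qproj qproj_eq_zero_iff)
qed

lemma image_left_reg_iff_left_reg_mod:
  assumes "ideal c R" "S \<subseteq> carrier R"
  shows "image_left_reg R S c \<longleftrightarrow> left_reg_mod R S c"
  using qproj_left_reg_iff[OF assms(1)] assms(2)
  by (auto simp: image_left_reg_def left_reg_mod_def image_subset_iff qproj_def)

lemma ideal_Inter_left_reg_mod:
  assumes "ring R"
  shows "ideal (\<Inter>{c. ideal c R \<and> left_reg_mod R S c}) R"
proof -
  interpret ring R by fact
  have "ideal (carrier R) R \<and> left_reg_mod R S (carrier R)"
    by (simp add: oneideal left_reg_mod_def)
  then show ?thesis
    by (intro i_Intersect) auto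
qed

lemma pa_eq_Inter:
  assumes "ring R" "S \<subseteq> carrier R"
  shows "pa R S = \<Inter>{c. ideal c R \<and> left_reg_mod R S c}"
proof -
  have "left_reg_mod R S (\<Inter>{c. ideal c R \<and> left_reg_mod R S c})"
    by (auto simp: left_reg_mod_def)
  then show ?thesis
    unfolding pa_def using ideal_Inter_left_reg_mod[OF assms(1)] image_left_reg_iff_left_reg_mod[OF _ assms(2)]
    by (intro the_equality) (blast, blast)
qed

lemma
  assumes "ring R" "S \<subseteq> carrier R"
  shows ideal_pa: "ideal (pa R S) R"
    and left_reg_mod_pa: "left_reg_mod R S (pa R S)"
    and pa_least: "ideal c R \<Longrightarrow> left_reg_mod R S c \<Longrightarrow> pa R S \<subseteq> c"
  unfolding pa_eq_Inter[OF assms]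
  by (auto simp: ideal_Inter_left_reg_mod[OF assms(1)]) (auto simp: left_reg_mod_def)

lemma qproj_image_left_reg:
  assumes "ideal c R" "S \<subseteq> carrier R" "left_reg_mod R S c"
  shows "qproj R c ` S \<subseteq> left_reg (R Quot c)"
  using image_left_reg_iff_left_reg_mod[OF assms(1,2)] assms(3)
  by (simp add: image_left_reg_def qproj_def[abs_def])

lemma left_reg_mod_disjoint:
  assumes "ideal c R" "left_reg_mod R S c" "c \<noteq> carrier R"
  shows "S \<inter> c = {}"
proof -
  interpret ideal c R by fact
  have "s \<notin> c" if "s \<in> S" for s
  proof
    assume "s \<in> c"
    then have "\<one>\<^bsub>R\<^esub> \<otimes>\<^bsub>R\<^esub> s \<in> c"
      by simp
    then have "\<one>\<^bsub>R\<^esub> \<in> c"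
      using assms(2) that unfolding left_reg_mod_def by blast
    then show False
      using assms(3) one_imp_carrier by blast
  qed
  then show ?thesis by blast
qed

lemma regular_left_ore_quotient:
  assumes "ring R" "left_ore_set R S" "ideal c R" "left_reg_mod R S c"
  shows "regular_left_ore (R Quot c) (qproj R c ` S)"
proof -
  note S = left_ore_setD[OF assms(2)]
  interpret \<pi>: ring_hom_ring R "R Quot c" "qproj R c"
    by (rule ring_hom_ringI2[OF assms(1) ideal.quotient_is_ring[OF assms(3)] qproj_ring_hom[OF assms(3)]])
  show ?thesis
  proof unfold_locales
    show "qproj R c ` S \<subseteq> carrier (R Quot c)"
      using S(1) by (auto simp: carrier_quotient_qproj)
    show "\<one>\<^bsub>R Quot c\<^esub> \<in> qproj R c ` S"
      using S(2) \<pi>.hom_one by (metis image_eqI)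
  next
    fix s t assume "s \<in> qproj R c ` S" "t \<in> qproj R c ` S"
    then obtain s0 t0 where st: "s0 \<in> S" "t0 \<in> S" "s = qproj R c s0" "t = qproj R c t0"
      by blast
    then have "s \<otimes>\<^bsub>R Quot c\<^esub> t = qproj R c (s0 \<otimes>\<^bsub>R\<^esub> t0)"
      using S(1) by (simp add: subsetD)
    then show "s \<otimes>\<^bsub>R Quot c\<^esub> t \<in> qproj R c ` S"
      using S(4) st by simp
  next
    fix r s assume "r \<in> carrier (R Quot c)" "s \<in> qproj R c ` S"
    then obtain y s0 where ys: "y \<in> carrier R" "s0 \<in> S" "r = qproj R c y" "s = qproj R c s0"
      by (auto simp: carrier_quotient_qproj)
    obtain u r' where "u \<in> S" "r' \<in> carrier R" "u \<otimes>\<^bsub>R\<^esub> y = r' \<otimes>\<^bsub>R\<^esub> s0"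
      using S(5)[OF ys(1,2)] by blast
    moreover have "u \<in> carrier R"
      using \<open>u \<in> S\<close> S(1) by blast
    ultimately have "qproj R c u \<otimes>\<^bsub>R Quot c\<^esub> r = qproj R c r' \<otimes>\<^bsub>R Quot c\<^esub> s"
      using ys S(1) by (simp add: subsetD flip: \<pi>.hom_mult)
    moreover have "qproj R c u \<in> qproj R c ` S" "qproj R c r' \<in> carrier (R Quot c)"
      using \<open>u \<in> S\<close> \<open>r' \<in> carrier R\<close> by simp_all
    ultimately show "\<exists>t\<in>qproj R c ` S. \<exists>r'\<in>carrier (R Quot c). t \<otimes>\<^bsub>R Quot c\<^esub> r = r' \<otimes>\<^bsub>R Quot c\<^esub> s"
      by blast
  next
    fix t x assume "t \<in> qproj R c ` S" "x \<in> carrier (R Quot c)" "x \<otimes>\<^bsub>R Quot c\<^esub> t = \<zero>\<^bsub>R Quot c\<^esub>"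
    then show "x = \<zero>\<^bsub>R Quot c\<^esub>"
      using qproj_image_left_reg[OF assms(3) S(1) assms(4)] unfolding left_reg_def by blast
  qed
qed

lemma (in regular_left_ore) left_denominator_set:
  assumes "\<zero> \<notin> T"
  shows "left_denominator_set A T"
proof -
  have "\<exists>t\<in>T. t \<otimes> r = \<zero>" if "r \<in> carrier A" "s \<in> T" "r \<otimes> s = \<zero>" for r s
  proof -
    have "r = \<zero>"
      using T_left_reg that by blast
    then show ?thesis
      using T_one by (intro bexI[of _ \<one>]) simp_all
  qed
  then show ?thesis
    unfolding left_denominator_set_def left_ore_set_def mult_set_def
    using assms T_closed T_one T_mult T_ore by (simp add: Ball_def)
qed

section \<open>The kernel of \<open>R \<rightarrow> R\<langle>S\<^sup>-\<^sup>1\<rangle>\<close>\<close>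

context
  fixes R :: "('a, 'm) ring_scheme" and S :: "'a set"
  assumes ring_R: "ring R" and ore_S: "left_ore_set R S"
begin

interpretation R: ring R by (fact ring_R)
interpretation L: ring "univ_loc R S" by (rule ring_univ_loc)
interpretation loc: ring_hom_ring R "univ_loc R S" "loc_map R S"
  by (rule ring_hom_ringI2[OF ring_R ring_univ_loc loc_map_ring_hom[OF ring_R]])

lemma S_carrier: "S \<subseteq> carrier R"
  using left_ore_setD(1)[OF ore_S] .

lemma ideal_ass: "ideal (ass R S) R"
  using loc.kernel_is_ideal unfolding a_kernel_def' ass_def .

lemma ass_right_cancel:
  assumes "s \<in> S" "y \<in> carrier R" "y \<otimes>\<^bsub>R\<^esub> s \<in> ass R S"
  shows "y \<in> ass R S"
  using assms S_carrier L.Units_mult_eq_zero(2)[OF loc_map_Units[OF ring_R S_carrier assms(1)]] by (auto simp: ass_def)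

lemma ass_left_cancel:
  assumes "s \<in> S" "r \<in> carrier R" "s \<otimes>\<^bsub>R\<^esub> r \<in> ass R S"
  shows "r \<in> ass R S"
  using assms S_carrier L.Units_mult_eq_zero(1)[OF loc_map_Units[OF ring_R S_carrier assms(1)]] by (auto simp: ass_def)

lemma pa_subset_ass: "pa R S \<subseteq> ass R S"
  using pa_least[OF ring_R S_carrier ideal_ass] ass_right_cancel
  unfolding left_reg_mod_def by blast

lemma ass_eq_vimage_ass_l:
  "ass R S = {r \<in> carrier R. qproj R (pa R S) r \<in> ass_l (R Quot pa R S) (qproj R (pa R S) ` S)}"
    (is "_ = {r \<in> carrier R. ?\<pi> r \<in> ass_l ?A ?T}")
proof -
  have ideal: "ideal (pa R S) R"
    using ideal_pa[OF ring_R S_carrier] .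
  interpret G: regular_left_ore ?A ?T
    using regular_left_ore_quotient[OF ring_R ore_S ideal left_reg_mod_pa[OF ring_R S_carrier]] .
  have hom: "G.germ_hom \<circ> ?\<pi> \<in> ring_hom R G.germ_ring"
    using ring_hom_trans[OF qproj_ring_hom[OF ideal] G.germ_hom_ring_hom] .
  have "(G.germ_hom \<circ> ?\<pi>) s \<in> Units G.germ_ring" if "s \<in> S" for s
    using G.germ_hom_Units that by simp
  then obtain \<psi> where \<psi>: "\<psi> \<in> ring_hom (univ_loc R S) G.germ_ring"
    "\<forall>r\<in>carrier R. \<psi> (loc_map R S r) = G.germ_hom (?\<pi> r)"
    using univ_loc_universal[OF G.ring_germ_ring hom _ ring_R S_carrier] by auto
  show ?thesis
  proof (intro equalityI subsetI)
    fix r assume r: "r \<in> ass R S"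
    then have "G.germ_hom (?\<pi> r) = \<psi> \<zero>\<^bsub>univ_loc R S\<^esub>"
      using \<psi>(2) by (auto simp: ass_def)
    also have "\<dots> = \<zero>\<^bsub>G.germ_ring\<^esub>"
      using ring_hom_zero[OF \<psi>(1) ring_univ_loc G.ring_germ_ring] .
    finally have "?\<pi> r \<in> ass_l ?A ?T"
      using r G.germ_hom_eq_zero_iff ring_hom_closed[OF qproj_ring_hom[OF ideal]] by (simp add: ass_def)
    then show "r \<in> {r \<in> carrier R. ?\<pi> r \<in> ass_l ?A ?T}"
      using r by (simp add: ass_def)
  next
    fix r assume "r \<in> {r \<in> carrier R. ?\<pi> r \<in> ass_l ?A ?T}"
    then obtain s where s: "s \<in> S" "r \<in> carrier R" "?\<pi> s \<otimes>\<^bsub>?A\<^esub> ?\<pi> r = \<zero>\<^bsub>?A\<^esub>"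
      by (auto simp: ass_l_def)
    moreover have "s \<in> carrier R"
      using s(1) S_carrier by blast
    ultimately have "?\<pi> (s \<otimes>\<^bsub>R\<^esub> r) = \<zero>\<^bsub>?A\<^esub>"
      using ring_hom_mult[OF qproj_ring_hom[OF ideal]] by simp
    then have "s \<otimes>\<^bsub>R\<^esub> r \<in> pa R S"
      using qproj_eq_zero_iff[OF ideal] s(2) \<open>s \<in> carrier R\<close> by simp
    then show "r \<in> ass R S"
      using ass_left_cancel[OF s(1,2)] pa_subset_ass by blast
  qed
qed

lemma univ_loc_nontrivial:
  assumes "pa R S \<noteq> carrier R"
  shows "\<one>\<^bsub>univ_loc R S\<^esub> \<noteq> \<zero>\<^bsub>univ_loc R S\<^esub>"
proof
  have ideal: "ideal (pa R S) R"
    using ideal_pa[OF ring_R S_carrier] .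
  interpret \<pi>: ring_hom_ring R "R Quot pa R S" "qproj R (pa R S)"
    by (rule ring_hom_ringI2[OF ring_R ideal.quotient_is_ring[OF ideal] qproj_ring_hom[OF ideal]])
  assume "\<one>\<^bsub>univ_loc R S\<^esub> = \<zero>\<^bsub>univ_loc R S\<^esub>"
  then have "\<one>\<^bsub>R\<^esub> \<in> ass R S"
    by (simp add: ass_def)
  then obtain s where s: "s \<in> S" "qproj R (pa R S) s = \<zero>\<^bsub>R Quot pa R S\<^esub>"
    unfolding ass_eq_vimage_ass_l using S_carrier by (auto simp: ass_l_def)
  then have "s \<in> pa R S"
    using qproj_eq_zero_iff[OF ideal] S_carrier by blast
  then show False
    using s(1) left_reg_mod_disjoint[OF ideal left_reg_mod_pa[OF ring_R S_carrier] assms] by blast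
qed

lemma left_localizable_iff_pa_proper: "left_localizable R S \<longleftrightarrow> pa R S \<noteq> carrier R"
proof
  assume "left_localizable R S"
  then have "\<one>\<^bsub>R\<^esub> \<notin> ass R S"
    by (simp add: left_localizable_def ass_def)
  then show "pa R S \<noteq> carrier R"
    using pa_subset_ass by auto
next
  assume "pa R S \<noteq> carrier R"
  then show "left_localizable R S"
    unfolding left_localizable_def
    using univ_loc_nontrivial univ_loc_left_fraction[OF ring_R ore_S] by blast
qed

lemma univ_loc_iso:
  assumes "ring Q" "f \<in> ring_hom R Q" "\<And>s. s \<in> S \<Longrightarrow> f s \<in> Units Q"
    and "\<And>q. q \<in> carrier Q \<Longrightarrow> \<exists>s\<in>S. \<exists>r\<in>carrier R. q = inv\<^bsub>Q\<^esub> (f s) \<otimes>\<^bsub>Q\<^esub> f r"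
    and "\<And>r. r \<in> carrier R \<Longrightarrow> f r = \<zero>\<^bsub>Q\<^esub> \<Longrightarrow> r \<in> ass R S"
  shows "\<exists>g \<in> ring_iso (univ_loc R S) Q. \<forall>r\<in>carrier R. g (loc_map R S r) = f r"
proof -
  interpret Q: ring Q by fact
  obtain \<psi> where \<psi>: "\<psi> \<in> ring_hom (univ_loc R S) Q" "\<forall>r\<in>carrier R. \<psi> (loc_map R S r) = f r"
    "\<forall>s\<in>S. \<psi> (loc_x R S s) = inv\<^bsub>Q\<^esub> (f s)"
    using univ_loc_universal[OF assms(1-3) ring_R S_carrier] by blast
  interpret \<psi>: ring_hom_ring "univ_loc R S" Q \<psi>
    by (rule ring_hom_ringI2[OF ring_univ_loc assms(1) \<psi>(1)])
  have \<psi>_fraction: "\<psi> (loc_x R S s \<otimes>\<^bsub>univ_loc R S\<^esub> loc_map R S r) = inv\<^bsub>Q\<^esub> (f s) \<otimes>\<^bsub>Q\<^esub> f r"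
    if "s \<in> S" "r \<in> carrier R" for s r
    using that \<psi>(2,3) \<psi>.hom_mult[OF loc_x_closed[of s S R] loc.hom_closed] by simp
  have "a_kernel (univ_loc R S) Q \<psi> = {\<zero>\<^bsub>univ_loc R S\<^esub>}"
  proof (intro equalityI subsetI)
    fix x assume "x \<in> a_kernel (univ_loc R S) Q \<psi>"
    then have x: "x \<in> carrier (univ_loc R S)" "\<psi> x = \<zero>\<^bsub>Q\<^esub>"
      unfolding a_kernel_def' by blast+
    then obtain s r where sr: "s \<in> S" "r \<in> carrier R" "x = loc_x R S s \<otimes>\<^bsub>univ_loc R S\<^esub> loc_map R S r"
      using univ_loc_left_fraction[OF ring_R ore_S] by blast
    then have "inv\<^bsub>Q\<^esub> (f s) \<otimes>\<^bsub>Q\<^esub> f r = \<zero>\<^bsub>Q\<^esub>"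
      using x(2) \<psi>_fraction by simp
    then have "f r = \<zero>\<^bsub>Q\<^esub>"
      using Q.Units_mult_eq_zero(1)[OF Q.Units_inv_Units[OF assms(3)[OF sr(1)]]]
        ring_hom_closed[OF assms(2) sr(2)] by simp
    then show "x \<in> {\<zero>\<^bsub>univ_loc R S\<^esub>}"
      using assms(5)[OF sr(2)] sr loc_x_closed[of s S R] by (simp add: ass_def)
  next
    fix x assume "x \<in> {\<zero>\<^bsub>univ_loc R S\<^esub>}"
    then show "x \<in> a_kernel (univ_loc R S) Q \<psi>"
      unfolding a_kernel_def' by simp
  qed
  then have "inj_on \<psi> (carrier (univ_loc R S))"
    by (rule \<psi>.trivial_ker_imp_inj)
  moreover have "\<psi> ` carrier (univ_loc R S) = carrier Q"
  proof (intro equalityI subsetI)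
    fix q assume "q \<in> carrier Q"
    then obtain s r where sr: "s \<in> S" "r \<in> carrier R" "q = inv\<^bsub>Q\<^esub> (f s) \<otimes>\<^bsub>Q\<^esub> f r"
      using assms(4) by blast
    then have "q = \<psi> (loc_x R S s \<otimes>\<^bsub>univ_loc R S\<^esub> loc_map R S r)"
      using \<psi>_fraction by simp
    moreover have "loc_x R S s \<otimes>\<^bsub>univ_loc R S\<^esub> loc_map R S r \<in> carrier (univ_loc R S)"
      using sr loc_x_closed[of s S R] by simp
    ultimately show "q \<in> \<psi> ` carrier (univ_loc R S)"
      by blast
  qed (use \<psi>.hom_closed in blast)
  ultimately show ?thesis
    using \<psi>(1,2) unfolding ring_iso_def bij_betw_def by blast
qed

lemma left_denominator_set_quotient:
  assumes "pa R S \<noteq> carrier R"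
  shows "left_denominator_set (R Quot pa R S) (qproj R (pa R S) ` S)"
proof -
  interpret G: regular_left_ore "R Quot pa R S" "qproj R (pa R S) ` S"
    using regular_left_ore_quotient[OF ring_R ore_S ideal_pa[OF ring_R S_carrier] left_reg_mod_pa[OF ring_R S_carrier]] .
  have "qproj R (pa R S) s \<noteq> \<zero>\<^bsub>R Quot pa R S\<^esub>" if "s \<in> S" for s
    using that S_carrier qproj_eq_zero_iff[OF ideal_pa[OF ring_R S_carrier]]
      left_reg_mod_disjoint[OF ideal_pa[OF ring_R S_carrier] left_reg_mod_pa[OF ring_R S_carrier] assms] by blast
  then show ?thesis
    by (intro G.left_denominator_set) auto
qed

lemma univ_loc_iso_ore_localization:
  assumes "is_left_ore_localization (R Quot pa R S) (qproj R (pa R S) ` S) Q \<sigma>"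
  shows "\<exists>f \<in> ring_iso (univ_loc R S) Q. \<forall>r\<in>carrier R. f (loc_map R S r) = \<sigma> (qproj R (pa R S) r)"
proof -
  let ?\<pi> = "qproj R (pa R S)" and ?A = "R Quot pa R S"
  have Q: "ring Q" "\<sigma> \<in> ring_hom ?A Q" "\<And>s. s \<in> S \<Longrightarrow> \<sigma> (?\<pi> s) \<in> Units Q"
    and frac: "\<And>q. q \<in> carrier Q \<Longrightarrow> \<exists>t\<in>?\<pi> ` S. \<exists>a\<in>carrier ?A. q = inv\<^bsub>Q\<^esub> (\<sigma> t) \<otimes>\<^bsub>Q\<^esub> \<sigma> a"
    and ker: "{a \<in> carrier ?A. \<sigma> a = \<zero>\<^bsub>Q\<^esub>} = ass_l ?A (?\<pi> ` S)"
    using assms unfolding is_left_ore_localization_def by auto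
  have "\<exists>s\<in>S. \<exists>r\<in>carrier R. q = inv\<^bsub>Q\<^esub> ((\<sigma> \<circ> ?\<pi>) s) \<otimes>\<^bsub>Q\<^esub> (\<sigma> \<circ> ?\<pi>) r" if "q \<in> carrier Q" for q
    using frac[OF that] unfolding carrier_quotient_qproj by auto
  moreover have "r \<in> ass R S" if "r \<in> carrier R" "(\<sigma> \<circ> ?\<pi>) r = \<zero>\<^bsub>Q\<^esub>" for r
    using that ker ring_hom_closed[OF qproj_ring_hom[OF ideal_pa[OF ring_R S_carrier]] that(1)]
    unfolding ass_eq_vimage_ass_l by auto
  ultimately show ?thesis
    using univ_loc_iso[OF Q(1) ring_hom_trans[OF qproj_ring_hom[OF ideal_pa[OF ring_R S_carrier]] Q(2)]] Q(3) by simp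
qed

end

theorem theorem1p5:
  fixes R :: "('a, 'm) ring_scheme" and S :: "'a set"
  assumes "ring R" and "left_ore_set R S"
  shows "(left_localizable R S \<longleftrightarrow> pa R S \<noteq> carrier R) \<and>
    (pa R S \<noteq> carrier R \<longrightarrow>
       left_denominator_set (R Quot pa R S) (qproj R (pa R S) ` S) \<and>
       qproj R (pa R S) ` S \<subseteq> left_reg (R Quot pa R S) \<and>
       ass R S = {r \<in> carrier R. qproj R (pa R S) r \<in> ass_l (R Quot pa R S) (qproj R (pa R S) ` S)} \<and>
       (\<forall>(Q :: ('b, 'n) ring_scheme) \<sigma>.
          is_left_ore_localization (R Quot pa R S) (qproj R (pa R S) ` S) Q \<sigma> \<longrightarrow>
          (\<exists>f \<in> ring_iso (univ_loc R S) Q.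
             \<forall>r\<in>carrier R. f (loc_map R S r) = \<sigma> (qproj R (pa R S) r))))"
proof -
  have "S \<subseteq> carrier R"
    using left_ore_setD(1)[OF assms(2)] .
  then have "qproj R (pa R S) ` S \<subseteq> left_reg (R Quot pa R S)"
    using qproj_image_left_reg ideal_pa left_reg_mod_pa assms(1) by blast
  then show ?thesis
    using left_localizable_iff_pa_proper[OF assms] left_denominator_set_quotient[OF assms]
      ass_eq_vimage_ass_l[OF assms] univ_loc_iso_ore_localization[OF assms]
    by blast
qed

end
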